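(* Let $f\colon V_0\to\mathbb{R}$ be continuous such that $\Gamma_f$ is a ruled surface. Let $R_1,R_2$ be distinct rulings of $\Gamma_f$ intersecting at a point $p\in\mathbb{H}$, with $m(R_1)<m(R_2)$. Then for every $m\in[m(R_1),m(R_2)]$, the horizontal line $L_{p,m}$ is a ruling of $\Gamma_f$.
   Context: $\mathbb{H}$ is $\mathbb{R}^3$ with product $(x,y,z)\cdot(x',y',z')=(x+x',y+y',z+z'+\frac{xy'-yx'}{2})$; $X=(1,0,0)$, $Y=(0,1,0)$, $v^t=tv$. A horizontal line is $\{p\cdot tv\}$ with $v=(a,b,0)\ne0$, slope $b/a$; $L_{p,m}=\{p\cdot(X+mY)^t:t\in\mathbb{R}\}$ is the horizontal line of slope $m$ through $p$. A ruled surface is a union of horizontal line segments (rulings) with endpoints in its boundary (for entire $\Gamma_f$ the rulings are horizontal lines). $V_0=\{(x,0,z)\}$, $\Gamma_f=\{u\cdot Y^{f(u)}:u\in V_0\}$. $m(R)$ denotes the slope of a ruling $R$. *)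

theory Defs
  imports "HOL-Analysis.Analysis"
begin

type_synonym heis = "real \<times> real \<times> real"

definition hmult :: "heis \<Rightarrow> heis \<Rightarrow> heis" where
  "hmult p q = (case p of (x,y,z) \<Rightarrow> case q of (x',y',z') \<Rightarrow>
      (x + x', y + y', z + z' + (x * y' - y * x') / 2))"

definition V0 :: "heis set" where
  "V0 = {(x, 0, z) | x z. True}"

definition hline :: "heis \<Rightarrow> real \<Rightarrow> real \<Rightarrow> heis set" where
  "hline p a b = {hmult p (t * a, t * b, 0) | t. True}"

definition horizontal_line :: "heis set \<Rightarrow> bool" where
  "horizontal_line L \<longleftrightarrow> (\<exists>p a b. (a, b) \<noteq> (0, 0) \<and> L = hline p a b)"

definition hslope :: "heis set \<Rightarrow> real" where
  "hslope L = (SOME s. \<exists>p a b. (a, b) \<noteq> (0, 0) \<and> L = hline p a b \<and> s = b / a)"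

definition Lpm :: "heis \<Rightarrow> real \<Rightarrow> heis set" where
  "Lpm p m = {hmult p (t, t * m, 0) | t. True}"

definition graph :: "(heis \<Rightarrow> real) \<Rightarrow> heis set" where
  "graph f = {hmult u (0, f u, 0) | u. u \<in> V0}"

definition ruling :: "(heis \<Rightarrow> real) \<Rightarrow> heis set \<Rightarrow> bool" where
  "ruling f R \<longleftrightarrow> horizontal_line R \<and> R \<subseteq> graph f"

definition ruled_graph :: "(heis \<Rightarrow> real) \<Rightarrow> bool" where
  "ruled_graph f \<longleftrightarrow> (\<forall>q \<in> graph f. \<exists>R. ruling f R \<and> q \<in> R)"

end

theory Submission
  imports Defs
begin

text \<open>Since \<open>(x,y,z) = (x,0,z - xy/2) \<cdot> Y\<^sup>y\<close>, a point lies on \<open>\<Gamma>\<^sub>f\<close> iff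
  \<open>y = f(x,0,z - xy/2)\<close>. Projected to \<open>V\<^sub>0\<close> along \<open>Y\<close>, a horizontal line of slope \<open>\<mu>\<close>
  becomes a parabola (its shadow) whose derivative is minus the \<open>y\<close>-coordinate of the line.
  So where the shadows of two rulings meet, \<open>f\<close> forces them to be tangent, and they lie on
  one side of each other. The shadows of \<open>R\<^sub>1\<close> and \<open>R\<^sub>2\<close> touch at the projection of \<open>p\<close>;
  a ruling through a point of \<open>\<Gamma>\<^sub>f\<close> above the shadow of \<open>L\<^sub>p\<^sub>,\<^sub>m\<close> has its shadow squeezed
  between them, hence passes through the projection of \<open>p\<close> tangentially and is the shadow of
  \<open>L\<^sub>p\<^sub>,\<^sub>m\<close>.\<close>

text \<open>The point of \<open>L\<^sub>q\<^sub>,\<^sub>\<mu>\<close> with \<open>x\<close>-coordinate \<open>x\<close> has \<open>y\<close>-coordinate \<open>Lpm_height q \<mu> x\<close>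
  and projects to \<open>(x, 0, Lpm_shadow q \<mu> x)\<close> in \<open>V\<^sub>0\<close>.\<close>

definition Lpm_height :: "heis \<Rightarrow> real \<Rightarrow> real \<Rightarrow> real" where
  "Lpm_height q \<mu> x = (case q of (x0, y0, _) \<Rightarrow> y0 + \<mu> * (x - x0))"

definition Lpm_shadow :: "heis \<Rightarrow> real \<Rightarrow> real \<Rightarrow> real" where
  "Lpm_shadow q \<mu> x =
     (case q of (x0, y0, z0) \<Rightarrow> z0 - x0 * y0 / 2 - y0 * (x - x0) - \<mu> * (x - x0)\<^sup>2 / 2)"

lemma hmult_simps [simp]:
  "hmult (x, y, z) (x', y', z') = (x + x', y + y', z + z' + (x * y' - y * x') / 2)"
  by (simp add: hmult_def)

lemma mem_graph_iff: "(x, y, z) \<in> graph f \<longleftrightarrow> y = f (x, 0, z - x * y / 2)"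
proof
  assume "(x, y, z) \<in> graph f"
  then obtain x' w where "(x, y, z) = hmult (x', 0, w) (0, f (x', 0, w), 0)"
    unfolding graph_def V0_def by blast
  then show "y = f (x, 0, z - x * y / 2)" by simp
next
  assume "y = f (x, 0, z - x * y / 2)"
  then have "(x, y, z) = hmult (x, 0, z - x * y / 2) (0, f (x, 0, z - x * y / 2), 0)"
    by (simp add: algebra_simps)
  moreover have "(x, 0, z - x * y / 2) \<in> V0" unfolding V0_def by blast
  ultimately show "(x, y, z) \<in> graph f" unfolding graph_def by blast
qed

lemma Lpm_height_expand: "Lpm_height q \<mu> x = Lpm_height q \<mu> r + \<mu> * (x - r)"
  by (cases q) (simp add: Lpm_height_def algebra_simps)

lemma Lpm_shadow_expand:
  "Lpm_shadow q \<mu> x = Lpm_shadow q \<mu> r - Lpm_height q \<mu> r * (x - r) - \<mu> * (x - r)\<^sup>2 / 2"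
  by (cases q) (simp add: Lpm_shadow_def Lpm_height_def field_simps power2_eq_square)

lemma Lpm_eq:
  "Lpm q \<mu> = {(x, Lpm_height q \<mu> x, Lpm_shadow q \<mu> x + x * Lpm_height q \<mu> x / 2) | x. True}"
proof -
  obtain x0 y0 z0 where q: "q = (x0, y0, z0)" by (cases q)
  have point: "hmult q (x - x0, (x - x0) * \<mu>, 0) =
      (x, Lpm_height q \<mu> x, Lpm_shadow q \<mu> x + x * Lpm_height q \<mu> x / 2)" for x
    by (simp add: q Lpm_height_def Lpm_shadow_def field_simps power2_eq_square)
  show ?thesis
  proof (intro equalityI subsetI)
    fix v
    assume "v \<in> Lpm q \<mu>"
    then obtain t where "v = hmult q ((x0 + t) - x0, ((x0 + t) - x0) * \<mu>, 0)"
      unfolding Lpm_def by auto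
    then show "v \<in> {(x, Lpm_height q \<mu> x, Lpm_shadow q \<mu> x + x * Lpm_height q \<mu> x / 2) | x. True}"
      unfolding point by blast
  qed (auto simp: Lpm_def simp flip: point)
qed

lemma Lpm_subset_graph_iff:
  "Lpm q \<mu> \<subseteq> graph f \<longleftrightarrow> (\<forall>x. f (x, 0, Lpm_shadow q \<mu> x) = Lpm_height q \<mu> x)"
proof -
  have "(x, Lpm_height q \<mu> x, Lpm_shadow q \<mu> x + x * Lpm_height q \<mu> x / 2) \<in> graph f
      \<longleftrightarrow> f (x, 0, Lpm_shadow q \<mu> x) = Lpm_height q \<mu> x" for x
    by (auto simp: mem_graph_iff)
  then show ?thesis unfolding Lpm_eq by blast
qed

lemma Lpm_eq_imp_slope_eq:
  assumes "Lpm q \<mu> = Lpm q' \<mu>'"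
  shows "\<mu> = \<mu>'"
proof -
  have "Lpm_height q \<mu> x = Lpm_height q' \<mu>' x" for x
    using assms[unfolded Lpm_eq] by blast
  then show ?thesis
    using Lpm_height_expand[of q \<mu> 1 0] Lpm_height_expand[of q' \<mu>' 1 0] by simp
qed

lemma Lpm_eq_of_mem:
  assumes "p \<in> Lpm q \<mu>"
  shows "Lpm p \<mu> = Lpm q \<mu>"
proof -
  obtain r where p: "p = (r, Lpm_height q \<mu> r, Lpm_shadow q \<mu> r + r * Lpm_height q \<mu> r / 2)"
    using assms unfolding Lpm_eq by blast
  have "Lpm_height p \<mu> x = Lpm_height q \<mu> x" for x
    using Lpm_height_expand[of q \<mu> x r] by (simp add: p Lpm_height_def)
  moreover have "Lpm_shadow p \<mu> x = Lpm_shadow q \<mu> x" for x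
    using Lpm_shadow_expand[of q \<mu> x r] by (simp add: p Lpm_shadow_def)
  ultimately show ?thesis unfolding Lpm_eq by simp
qed

lemma hline_eq_Lpm:
  assumes "a \<noteq> 0"
  shows "hline q a b = Lpm q (b / a)"
  unfolding hline_def Lpm_def
proof (intro equalityI subsetI)
  fix v
  assume "v \<in> {hmult q (t * a, t * b, 0) | t. True}"
  then obtain t where "v = hmult q (t * a, t * b, 0)" by blast
  also have "(t * a, t * b, 0) = (t * a, (t * a) * (b / a), 0::real)" using assms by simp
  finally show "v \<in> {hmult q (t, t * (b / a), 0) | t. True}" by blast
next
  fix v
  assume "v \<in> {hmult q (t, t * (b / a), 0) | t. True}"
  then obtain t where "v = hmult q (t, t * (b / a), 0)" by blast
  also have "(t, t * (b / a), 0) = ((t / a) * a, (t / a) * b, 0::real)" using assms by simp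
  finally show "v \<in> {hmult q (t * a, t * b, 0) | t. True}" by blast
qed

lemma horizontal_line_Lpm: "horizontal_line (Lpm q \<mu>)"
proof -
  have "Lpm q \<mu> = hline q 1 \<mu>" using hline_eq_Lpm[of 1 q \<mu>] by simp
  then show ?thesis unfolding horizontal_line_def by (intro exI[of _ q] exI[of _ 1] exI[of _ \<mu>]) simp
qed

lemma vertical_hline_subset_graph:
  assumes "hline q 0 b \<subseteq> graph f"
  shows "b = 0"
proof -
  obtain x y z where q: "q = (x, y, z)" by (cases q)
  have "hmult q (t * 0, t * b, 0) \<in> graph f" for t
    using assms unfolding hline_def by blast
  from this[of 0] this[of 1]
  have "y = f (x, 0, z - x * y / 2)" "y + b = f (x, 0, z + x * b / 2 - x * (y + b) / 2)"
    by (simp_all add: q mem_graph_iff)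
  moreover have "z + x * b / 2 - x * (y + b) / 2 = z - x * y / 2"
    by (simp add: algebra_simps)
  ultimately show ?thesis by simp
qed

lemma ruling_eq_Lpm:
  assumes "ruling f R"
  shows "\<exists>q. R = Lpm q (hslope R)"
proof -
  have nonvertical: "R = Lpm q (b / a)" if "(a, b) \<noteq> (0, 0)" "R = hline q a b" for q a b
  proof -
    have "R \<subseteq> graph f" using assms unfolding ruling_def by blast
    then have "a \<noteq> 0" using that vertical_hline_subset_graph[of q b f] by auto
    with that(2) show ?thesis by (simp add: hline_eq_Lpm)
  qed
  obtain q a b where h: "(a, b) \<noteq> (0, 0)" "R = hline q a b"
    using assms unfolding ruling_def horizontal_line_def by blast
  have "hslope R = b / a"
    unfolding hslope_def
  proof (rule some_equality)
    fix s
    assume "\<exists>p a' b'. (a', b') \<noteq> (0, 0) \<and> R = hline p a' b' \<and> s = b' / a'"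
    then obtain p a' b' where h': "(a', b') \<noteq> (0, 0)" "R = hline p a' b'" "s = b' / a'"
      by blast
    have "Lpm p (b' / a') = Lpm q (b / a)"
      using nonvertical[OF h(1,2)] nonvertical[OF h'(1,2)] by simp
    then show "s = b / a" unfolding h'(3) by (rule Lpm_eq_imp_slope_eq)
  qed (use h in blast)
  then show ?thesis using nonvertical[OF h] by metis
qed

lemma ruled_graph_obtain_Lpm:
  assumes "ruled_graph f"
  obtains q \<mu> where "Lpm q \<mu> \<subseteq> graph f" "Lpm_shadow q \<mu> x = w"
proof -
  define y where "y = f (x, 0, w)"
  have "(x, y, w + x * y / 2) \<in> graph f" by (simp add: mem_graph_iff y_def)
  then obtain R where R: "ruling f R" "(x, y, w + x * y / 2) \<in> R"
    using assms unfolding ruled_graph_def by blast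
  moreover obtain q \<mu> where "R = Lpm q \<mu>" using R(1) ruling_eq_Lpm by blast
  ultimately have sub: "Lpm q \<mu> \<subseteq> graph f" and "(x, y, w + x * y / 2) \<in> Lpm q \<mu>"
    unfolding ruling_def by blast+
  then obtain x' where "(x, y, w + x * y / 2) =
      (x', Lpm_height q \<mu> x', Lpm_shadow q \<mu> x' + x' * Lpm_height q \<mu> x' / 2)"
    unfolding Lpm_eq by blast
  then have "Lpm_shadow q \<mu> x = w" by auto
  with sub show thesis by (rule that)
qed

lemma Lpm_shadow_diff_of_tangent:
  assumes "Lpm_shadow q \<mu> r = Lpm_shadow q' \<mu>' r" "Lpm_height q \<mu> r = Lpm_height q' \<mu>' r"
  shows "Lpm_shadow q \<mu> x - Lpm_shadow q' \<mu>' x = - ((\<mu> - \<mu>') * (x - r)\<^sup>2 / 2)"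
  unfolding Lpm_shadow_expand[of q \<mu> x r] Lpm_shadow_expand[of q' \<mu>' x r] assms
  by (simp add: field_simps)

lemma Lpm_shadows_no_crossing:
  assumes "Lpm q \<mu> \<subseteq> graph f" "Lpm q' \<mu>' \<subseteq> graph f"
  shows "(Lpm_shadow q \<mu> s1 - Lpm_shadow q' \<mu>' s1) * (Lpm_shadow q \<mu> s2 - Lpm_shadow q' \<mu>' s2) \<ge> 0"
proof (rule ccontr)
  define D where "D x = Lpm_shadow q \<mu> x - Lpm_shadow q' \<mu>' x" for x
  assume "\<not> D s1 * D s2 \<ge> 0"
  then have sign_change: "D s1 * D s2 < 0" by (simp add: D_def)
  have "continuous_on {min s1 s2..max s1 s2} D"
    unfolding D_def Lpm_shadow_def by (cases q; cases q') (auto intro!: continuous_intros)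
  moreover have "min (D s1) (D s2) \<le> 0" "0 \<le> max (D s1) (D s2)"
    using sign_change by (auto simp: mult_less_0_iff)
  ultimately obtain r where "D r = 0"
    using IVT'[of D s1 0 s2] IVT2'[of D s1 0 s2] IVT'[of D s2 0 s1] IVT2'[of D s2 0 s1]
    by (cases "s1 \<le> s2") (auto simp: min_def max_def split: if_splits)
  then have "Lpm_shadow q \<mu> r = Lpm_shadow q' \<mu>' r" by (simp add: D_def)
  moreover from this have "Lpm_height q \<mu> r = Lpm_height q' \<mu>' r"
    using assms by (metis Lpm_subset_graph_iff)
  ultimately have "D x = - ((\<mu> - \<mu>') * (x - r)\<^sup>2 / 2)" for x
    unfolding D_def by (rule Lpm_shadow_diff_of_tangent)
  then have "D s1 * D s2 = ((\<mu> - \<mu>') * (s1 - r) * (s2 - r) / 2)\<^sup>2"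
    by (simp only:) (simp add: power2_eq_square field_simps)
  with sign_change show False by simp
qed

lemma Lpm_shadow_pinched:
  assumes "Lpm q \<mu> \<subseteq> graph f" "Lpm p m1 \<subseteq> graph f" "Lpm p m2 \<subseteq> graph f"
    and "m1 < m" "m < m2" "x \<noteq> fst p" "Lpm_shadow q \<mu> x = Lpm_shadow p m x"
  shows "Lpm_shadow q \<mu> (fst p) = Lpm_shadow p m (fst p)"
proof -
  have pencil: "Lpm_shadow p m x - Lpm_shadow p m' x = - ((m - m') * (x - fst p)\<^sup>2 / 2)" for m'
    by (rule Lpm_shadow_diff_of_tangent; cases p; simp add: Lpm_shadow_def Lpm_height_def)
  have at_p: "Lpm_shadow p m' (fst p) = Lpm_shadow p m (fst p)" for m'
    by (cases p) (simp add: Lpm_shadow_def)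
  have "(x - fst p)\<^sup>2 > 0" using assms(6) by simp
  then have "Lpm_shadow q \<mu> x - Lpm_shadow p m1 x < 0" "Lpm_shadow q \<mu> x - Lpm_shadow p m2 x > 0"
    using pencil[of m1] pencil[of m2] assms(4,5,7) by (simp_all add: mult_pos_pos mult_neg_pos)
  moreover have
    "(Lpm_shadow q \<mu> x - Lpm_shadow p m' x) * (Lpm_shadow q \<mu> (fst p) - Lpm_shadow p m (fst p)) \<ge> 0"
    if "Lpm p m' \<subseteq> graph f" for m'
    using Lpm_shadows_no_crossing[OF assms(1) that, of x "fst p"] by (simp only: at_p[of m'])
  ultimately have "Lpm_shadow q \<mu> (fst p) - Lpm_shadow p m (fst p) \<le> 0"
    "Lpm_shadow q \<mu> (fst p) - Lpm_shadow p m (fst p) \<ge> 0"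
    using assms(2,3) by (fastforce simp: zero_le_mult_iff)+
  then show ?thesis by simp
qed

lemma Lpm_between_rulings_subset_graph:
  assumes "ruled_graph f" "Lpm p m1 \<subseteq> graph f" "Lpm p m2 \<subseteq> graph f" "m1 \<le> m" "m \<le> m2"
  shows "Lpm p m \<subseteq> graph f"
  unfolding Lpm_subset_graph_iff
proof
  fix x
  have on_ruling: "f (x', 0, Lpm_shadow q \<mu> x') = Lpm_height q \<mu> x'"
    if "Lpm q \<mu> \<subseteq> graph f" for q \<mu> x'
    using that by (simp add: Lpm_subset_graph_iff)
  have at_p: "Lpm_shadow p \<mu> (fst p) = Lpm_shadow p m1 (fst p)"
    "Lpm_height p \<mu> (fst p) = Lpm_height p m1 (fst p)" for \<mu>
    by (cases p; simp add: Lpm_shadow_def Lpm_height_def)+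
  consider "m = m1" | "m = m2" | "x = fst p" | "m1 < m" "m < m2" "x \<noteq> fst p"
    using assms(4,5) by linarith
  then show "f (x, 0, Lpm_shadow p m x) = Lpm_height p m x"
  proof cases
    case 1
    then show ?thesis using on_ruling[OF assms(2)] by simp
  next
    case 2
    then show ?thesis using on_ruling[OF assms(3)] by simp
  next
    case 3
    then show ?thesis using on_ruling[OF assms(2), of "fst p"] by (simp add: at_p[of m])
  next
    case 4
    obtain q \<mu> where ruling_q: "Lpm q \<mu> \<subseteq> graph f"
      and through_x: "Lpm_shadow q \<mu> x = Lpm_shadow p m x"
      using ruled_graph_obtain_Lpm[OF assms(1)] by metis
    have shadow_p: "Lpm_shadow q \<mu> (fst p) = Lpm_shadow p m (fst p)"
      using Lpm_shadow_pinched[OF ruling_q assms(2,3) 4 through_x] .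
    have "Lpm_height q \<mu> (fst p) = f (fst p, 0, Lpm_shadow p m1 (fst p))"
      using on_ruling[OF ruling_q, of "fst p"] by (simp add: shadow_p at_p[of m])
    also have "\<dots> = Lpm_height p m (fst p)"
      using on_ruling[OF assms(2), of "fst p"] by (simp add: at_p[of m])
    finally have height_p: "Lpm_height q \<mu> (fst p) = Lpm_height p m (fst p)" .
    have "Lpm_shadow q \<mu> x - Lpm_shadow p m x = - ((\<mu> - m) * (x - fst p)\<^sup>2 / 2)"
      using shadow_p height_p by (rule Lpm_shadow_diff_of_tangent)
    then have "(\<mu> - m) * (x - fst p)\<^sup>2 = 0" by (simp add: through_x)
    then have "\<mu> = m" using 4 by simp
    then have "Lpm_height q \<mu> x = Lpm_height p m x"
      using height_p Lpm_height_expand[of q \<mu> x "fst p"] Lpm_height_expand[of p m x "fst p"]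
      by simp
    then show ?thesis
      using on_ruling[OF ruling_q, of x] by (simp add: through_x)
  qed
qed

theorem lemma4p3:
  fixes f :: "heis \<Rightarrow> real" and R1 R2 :: "heis set" and p :: heis
  assumes "continuous_on V0 f"
    and "ruled_graph f"
    and "ruling f R1" and "ruling f R2" and "R1 \<noteq> R2"
    and "p \<in> R1" and "p \<in> R2"
    and "hslope R1 < hslope R2"
  shows "\<forall>m \<in> {hslope R1 .. hslope R2}. ruling f (Lpm p m)"
proof -
  define m1 m2 where "m1 = hslope R1" and "m2 = hslope R2"
  obtain q1 q2 where "R1 = Lpm q1 m1" "R2 = Lpm q2 m2"
    using ruling_eq_Lpm assms(3,4) unfolding m1_def m2_def by metis
  with assms(6,7) have "R1 = Lpm p m1" "R2 = Lpm p m2"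
    by (metis Lpm_eq_of_mem)+
  with assms(3,4) have "Lpm p m1 \<subseteq> graph f" "Lpm p m2 \<subseteq> graph f"
    unfolding ruling_def by blast+
  then have "Lpm p m \<subseteq> graph f" if "m1 \<le> m" "m \<le> m2" for m
    using Lpm_between_rulings_subset_graph assms(2) that by blast
  then show ?thesis
    unfolding ruling_def m1_def m2_def by (simp add: horizontal_line_Lpm)
qed

end
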